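(* Let $(\mathcal{T},\mathcal{F},\mathcal{S})$ be a tree of fusion systems satisfying $(H)$, with completion $\mathcal{F}_\mathcal{T}$ on $S:=\mathcal{S}(v_* )$, and fix $P\le S$. Then: (a) The connected component of the vertex $[\iota_P^S]_{\mathcal{F}(v_* )}$ in the $P$-orbit graph $\operatorname{Rep}(P,\mathcal{F})$ is equal to (isomorphic to) the subgraph $\operatorname{Rep}_{\mathcal{F}_\mathcal{T}}(P,\mathcal{F})$. (b) The map $\Phi_P:\pi_0(\operatorname{Rep}(P,\mathcal{F}))\to\operatorname{Rep}(P,\mathcal{F}_\mathcal{T})$ sending the connected component of a vertex $[\alpha]_{\mathcal{F}(v)}$ to $[\alpha\circ\iota_{\mathcal{S}(v)}^S]_{\mathcal{F}_\mathcal{T}}$ is a well-defined bijection.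
   Context: Conventions: homomorphisms act on the right, $\alpha\circ\beta$ means first $\alpha$ then $\beta$, $\iota$ denotes inclusions. Fusion systems, morphisms of fusion systems, trees of fusion systems $(\mathcal{T},\mathcal{F},\mathcal{S})$ (finite tree $\mathcal{T}$; finite $p$-groups $\mathcal{S}(v),\mathcal{S}(e)$ with monomorphisms $\mathcal{S}(f_{ev}):\mathcal{S}(e)\to\mathcal{S}(v)$ for $v$ incident on $e$; fusion systems $\mathcal{F}(v)$ on $\mathcal{S}(v)$, $\mathcal{F}(e)$ on $\mathcal{S}(e)$ with $\mathcal{S}(f_{ev})$ an injective morphism of fusion systems) are as usual. Hypothesis $(H)$: there is a vertex $v_*$ such that for every vertex $v\neq v_*$, the edge $e$ incident on $v$ on the minimal path from $v$ to $v_*$ has $\mathcal{S}(f_{ev})$ an isomorphism. Under $(H)$ all $\mathcal{S}(v),\mathcal{S}(e)$ are identified with subgroups of $S=\mathcal{S}(v_* )$ so that the $\mathcal{S}(f_{ev})$ are inclusions, and the completion is $\mathcal{F}_\mathcal{T}:=\langle\operatorname{Hom}_{\mathcal{F}(v)}(Q,\mathcal{S}(v))\mid Q\le\mathcal{S}(v), v\in V(\mathcal{T})\rangle_S$, the smallest fusion system on $S$ containing all $\mathcal{F}(v)$. For a fusion system $\mathcal{K}$ on $T$ and a $p$-group $P$, define $\alpha\sim\beta$ on $\operatorname{Hom}(P,T)$ iff there is $\gamma\in\operatorname{Iso}_\mathcal{K}(P\alpha,P\beta)$ with $\alpha\circ\gamma=\beta$; $\operatorname{Rep}(P,\mathcal{K}):=\operatorname{Hom}(P,T)/\!\sim$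 with classes $[\alpha]_\mathcal{K}$; if $\hat{\mathcal{K}}\supseteq\mathcal{K}$ is a fusion system, $\operatorname{Rep}_{\hat{\mathcal{K}}}(P,\mathcal{K}):=\operatorname{Hom}_{\hat{\mathcal{K}}}(P,T)/\!\sim$. The $P$-orbit graph $\operatorname{Rep}(P,\mathcal{F})$ has vertex set the disjoint union over $v\in V(\mathcal{T})$ of $\operatorname{Rep}(P,\mathcal{F}(v))$ and edge set the disjoint union over $e\in E(\mathcal{T})$ of $\operatorname{Rep}(P,\mathcal{F}(e))$; an edge $[\gamma]_{\mathcal{F}(e)}$ with $e=(v,w)$ joins $[\gamma\circ\iota_{\mathcal{S}(e)}^{\mathcal{S}(v)}]_{\mathcal{F}(v)}$ and $[\gamma\circ\iota_{\mathcal{S}(e)}^{\mathcal{S}(w)}]_{\mathcal{F}(w)}$. For $P\le S$ under $(H)$, $\operatorname{Rep}_{\mathcal{F}_\mathcal{T}}(P,\mathcal{F})$ is the subgraph with vertices $\operatorname{Rep}_{\mathcal{F}_\mathcal{T}}(P,\mathcal{F}(v))$ and edges $\operatorname{Rep}_{\mathcal{F}_\mathcal{T}}(P,\mathcal{F}(e))$ (classes of morphisms lying in $\mathcal{F}_\mathcal{T}$). *)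

theory Defs
  imports "HOL-Algebra.Algebra" "HOL-Computational_Algebra.Primes"
begin

text \<open>All groups are subgroups of one ambient group G (the identification
provided by hypothesis (H)). Homomorphisms are extensional functions
(undefined outside their domain); composition "first alpha then gamma" is
compose Q gamma alpha.\<close>

definition p_group :: "('a,'b) monoid_scheme \<Rightarrow> nat \<Rightarrow> 'a set \<Rightarrow> bool" where
  "p_group G p S \<longleftrightarrow> Factorial_Ring.prime p \<and> subgroup S G \<and> finite S \<and> (\<exists>n. card S = p ^ n)"

definition sub_hom :: "('a,'b) monoid_scheme \<Rightarrow> 'a set \<Rightarrow> 'a set \<Rightarrow> ('a \<Rightarrow> 'a) set" where
  "sub_hom G Q R = {\<phi>. \<phi> \<in> Q \<rightarrow>\<^sub>E R \<and>
      (\<forall>x\<in>Q. \<forall>y\<in>Q. \<phi> (x \<otimes>\<^bsub>G\<^esub> y) = \<phi> x \<otimes>\<^bsub>G\<^esub> \<phi> y)}"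

definition conjmap :: "('a,'b) monoid_scheme \<Rightarrow> 'a \<Rightarrow> 'a set \<Rightarrow> ('a \<Rightarrow> 'a)" where
  "conjmap G g Q = restrict (\<lambda>x. inv\<^bsub>G\<^esub> g \<otimes>\<^bsub>G\<^esub> x \<otimes>\<^bsub>G\<^esub> g) Q"

definition Hom_S :: "('a,'b) monoid_scheme \<Rightarrow> 'a set \<Rightarrow> 'a set \<Rightarrow> 'a set \<Rightarrow> ('a \<Rightarrow> 'a) set" where
  "Hom_S G S Q R = {conjmap G g Q | g. g \<in> S \<and> conjmap G g Q ` Q \<subseteq> R}"

text \<open>A fusion system F on S: F Q R is the set Hom_F(Q,R).\<close>
definition fusion_system ::
  "('a,'b) monoid_scheme \<Rightarrow> nat \<Rightarrow> 'a set \<Rightarrow> ('a set \<Rightarrow> 'a set \<Rightarrow> ('a \<Rightarrow> 'a) set) \<Rightarrow> bool" where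
  "fusion_system G p S F \<longleftrightarrow>
     p_group G p S \<and>
     (\<forall>Q R. F Q R \<noteq> {} \<longrightarrow> subgroup Q G \<and> Q \<subseteq> S \<and> subgroup R G \<and> R \<subseteq> S) \<and>
     (\<forall>Q R. subgroup Q G \<and> Q \<subseteq> S \<and> subgroup R G \<and> R \<subseteq> S \<longrightarrow>
        Hom_S G S Q R \<subseteq> F Q R \<and> F Q R \<subseteq> {\<phi> \<in> sub_hom G Q R. inj_on \<phi> Q}) \<and>
     (\<forall>Q R \<phi>. \<phi> \<in> F Q R \<longrightarrow>
        \<phi> \<in> F Q (\<phi> ` Q) \<and> restrict (inv_into Q \<phi>) (\<phi> ` Q) \<in> F (\<phi> ` Q) Q) \<and>
     (\<forall>Q R T \<phi> \<psi>. \<phi> \<in> F Q R \<longrightarrow> \<psi> \<in> F R T \<longrightarrow> compose Q \<psi> \<phi> \<in> F Q T)"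

definition completion ::
  "('a,'b) monoid_scheme \<Rightarrow> nat \<Rightarrow> 'a set \<Rightarrow> 'v set \<Rightarrow> ('v \<Rightarrow> 'a set)
   \<Rightarrow> ('v \<Rightarrow> 'a set \<Rightarrow> 'a set \<Rightarrow> ('a \<Rightarrow> 'a) set) \<Rightarrow> 'a set \<Rightarrow> 'a set \<Rightarrow> ('a \<Rightarrow> 'a) set" where
  "completion G p S V SV FV = (\<lambda>Q R. \<Inter> {F' Q R | F'. fusion_system G p S F' \<and>
      (\<forall>v\<in>V. \<forall>Q'. FV v Q' (SV v) \<subseteq> F' Q' (SV v))})"

text \<open>Finite trees: vertex set V, each edge stored once as an ordered pair.\<close>
definition undir :: "('v \<times> 'v) set \<Rightarrow> ('v \<times> 'v) set" where
  "undir E = E \<union> E\<inverse>"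

definition fin_tree :: "'v set \<Rightarrow> ('v \<times> 'v) set \<Rightarrow> bool" where
  "fin_tree V E \<longleftrightarrow> finite V \<and> V \<noteq> {} \<and> E \<subseteq> V \<times> V \<and> (\<forall>v. (v,v) \<notin> E) \<and>
     (\<forall>v w. (v,w) \<in> E \<longrightarrow> (w,v) \<notin> E) \<and>
     (\<forall>v\<in>V. \<forall>w\<in>V. (v,w) \<in> (undir E)\<^sup>*) \<and> card E + 1 = card V"

definition tree_dist :: "('v \<times> 'v) set \<Rightarrow> 'v \<Rightarrow> 'v \<Rightarrow> nat" where
  "tree_dist E u w = (LEAST n. (u,w) \<in> (undir E) ^^ n)"

text \<open>Hypothesis (H), after identification: for v \<noteq> v*, the edge at v on the
minimal path to v* (the edge at v whose other end is closer to v*) has S(e) = S(v).\<close>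
definition hyp_H :: "'v set \<Rightarrow> ('v \<times> 'v) set \<Rightarrow> ('v \<Rightarrow> 'a set) \<Rightarrow> ('v \<times> 'v \<Rightarrow> 'a set) \<Rightarrow> 'v \<Rightarrow> bool" where
  "hyp_H V E SV SE vs \<longleftrightarrow> vs \<in> V \<and>
     (\<forall>v\<in>V. v \<noteq> vs \<longrightarrow> (\<forall>e\<in>E. \<forall>w. (e = (v,w) \<or> e = (w,v)) \<and>
        tree_dist E w vs < tree_dist E v vs \<longrightarrow> SE e = SV v))"

definition iso_in :: "('a set \<Rightarrow> 'a set \<Rightarrow> ('a \<Rightarrow> 'a) set) \<Rightarrow> 'a set \<Rightarrow> 'a set \<Rightarrow> ('a \<Rightarrow> 'a) set" where
  "iso_in K A B = {\<gamma> \<in> K A B. bij_betw \<gamma> A B}"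

definition rep_rel :: "('a,'b) monoid_scheme \<Rightarrow> ('a set \<Rightarrow> 'a set \<Rightarrow> ('a \<Rightarrow> 'a) set)
    \<Rightarrow> 'a set \<Rightarrow> 'a set \<Rightarrow> (('a \<Rightarrow> 'a) \<times> ('a \<Rightarrow> 'a)) set" where
  "rep_rel G K P T = {(\<alpha>,\<beta>). \<alpha> \<in> sub_hom G P T \<and> \<beta> \<in> sub_hom G P T \<and>
      (\<exists>\<gamma> \<in> iso_in K (\<alpha> ` P) (\<beta> ` P). compose P \<gamma> \<alpha> = \<beta>)}"

definition Rep :: "('a,'b) monoid_scheme \<Rightarrow> ('a set \<Rightarrow> 'a set \<Rightarrow> ('a \<Rightarrow> 'a) set)
    \<Rightarrow> 'a set \<Rightarrow> 'a set \<Rightarrow> ('a \<Rightarrow> 'a) set set" where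
  "Rep G K P T = sub_hom G P T // rep_rel G K P T"

definition Rep_in :: "('a,'b) monoid_scheme \<Rightarrow> ('a set \<Rightarrow> 'a set \<Rightarrow> ('a \<Rightarrow> 'a) set)
    \<Rightarrow> ('a set \<Rightarrow> 'a set \<Rightarrow> ('a \<Rightarrow> 'a) set) \<Rightarrow> 'a set \<Rightarrow> 'a set \<Rightarrow> ('a \<Rightarrow> 'a) set set" where
  "Rep_in G Khat K P T = Khat P T // rep_rel G K P T"

definition rep_cls :: "('a,'b) monoid_scheme \<Rightarrow> ('a set \<Rightarrow> 'a set \<Rightarrow> ('a \<Rightarrow> 'a) set)
    \<Rightarrow> 'a set \<Rightarrow> 'a set \<Rightarrow> ('a \<Rightarrow> 'a) \<Rightarrow> ('a \<Rightarrow> 'a) set" where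
  "rep_cls G K P T \<alpha> = rep_rel G K P T `` {\<alpha>}"

definition orbit_vertices where
  "orbit_vertices G V SV FV P = {(v,c). v \<in> V \<and> c \<in> Rep G (FV v) P (SV v)}"

definition orbit_edges where
  "orbit_edges G E SE FE P = {(e,c). e \<in> E \<and> c \<in> Rep G (FE e) P (SE e)}"

definition orbit_incident where
  "orbit_incident G SV FV P x \<epsilon> \<longleftrightarrow> (\<exists>v w c \<gamma>. \<epsilon> = ((v,w),c) \<and> \<gamma> \<in> c \<and>
      (x = (v, rep_cls G (FV v) P (SV v) \<gamma>) \<or> x = (w, rep_cls G (FV w) P (SV w) \<gamma>)))"

definition orbit_adj where
  "orbit_adj G E SV SE FV FE P = {(x,y). \<exists>v w c \<gamma>. ((v,w),c) \<in> orbit_edges G E SE FE P \<and>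
      \<gamma> \<in> c \<and> x = (v, rep_cls G (FV v) P (SV v) \<gamma>) \<and> y = (w, rep_cls G (FV w) P (SV w) \<gamma>)}"

definition orbit_conn where
  "orbit_conn G E SV SE FV FE P = (undir (orbit_adj G E SV SE FV FE P))\<^sup>*"

end

theory Submission
  imports Defs
begin

text \<open>Each vertex [\<alpha>]_F(v) of the orbit graph is joined to [\<alpha>]_F(v*): by (H) the edge from
v towards v* carries all of S(v), so the path towards the root never changes the homomorphism
\<alpha>. Hence every morphism of every F(v) preserves connected components, measured at v*. The
component-preserving injective homomorphisms between subgroups of S form a fusion system, so by
minimality of the completion all morphisms of F_T preserve components. Conversely an edge
identifies F(v)- and F(w)-classes of a single homomorphism, hence also F_T-classes. So
[\<alpha>]_F(v) and [\<beta>]_F(w) are connected iff \<alpha> and \<beta> are F_T-conjugate, which yields both the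
description of the component of [\<iota>]_F(v*) and the bijection \<Phi>.\<close>

section \<open>Homomorphisms between subgroups\<close>

lemma sub_hom_mono: "R \<subseteq> R' \<Longrightarrow> sub_hom G Q R \<subseteq> sub_hom G Q R'"
  unfolding sub_hom_def by auto

lemma sub_hom_image_subset: "\<alpha> \<in> sub_hom G P R \<Longrightarrow> \<alpha> ` P \<subseteq> R"
  unfolding sub_hom_def by auto

lemma sub_hom_onto_image: "\<alpha> \<in> sub_hom G P R \<Longrightarrow> \<alpha> \<in> sub_hom G P (\<alpha> ` P)"
  unfolding sub_hom_def by auto

lemma sub_hom_undefined: "\<alpha> \<in> sub_hom G P R \<Longrightarrow> x \<notin> P \<Longrightarrow> \<alpha> x = undefined"
  unfolding sub_hom_def by auto

lemma sub_hom_compose: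
  assumes "\<alpha> \<in> sub_hom G P Q" "\<phi> \<in> sub_hom G Q R" "subgroup P G"
  shows "compose P \<phi> \<alpha> \<in> sub_hom G P R"
  using assms unfolding sub_hom_def compose_def by (auto simp: PiE_def Pi_def subgroup.m_closed)

lemma restrict_id_sub_hom: "subgroup P G \<Longrightarrow> P \<subseteq> R \<Longrightarrow> restrict id P \<in> sub_hom G P R"
  unfolding sub_hom_def by (auto simp: subgroup.m_closed)

lemma compose_restrict_id_left:
  assumes "\<alpha> \<in> sub_hom G P Q" "\<alpha> ` P \<subseteq> A"
  shows "compose P (restrict id A) \<alpha> = \<alpha>"
  using assms sub_hom_undefined[OF assms(1)] unfolding compose_def by fastforce

lemma compose_restrict_id_right:
  assumes "\<beta> \<in> sub_hom G P R"
  shows "compose P \<beta> (restrict id P) = \<beta>"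
  using sub_hom_undefined[OF assms] unfolding compose_def by fastforce

lemma sub_hom_inv_into:
  assumes \<phi>: "\<phi> \<in> sub_hom G Q R" and inj: "inj_on \<phi> Q" and Q: "subgroup Q G"
  shows "restrict (inv_into Q \<phi>) (\<phi> ` Q) \<in> sub_hom G (\<phi> ` Q) Q"
  unfolding sub_hom_def
proof (intro CollectI conjI ballI)
  show "restrict (inv_into Q \<phi>) (\<phi> ` Q) \<in> \<phi> ` Q \<rightarrow>\<^sub>E Q" by (auto intro: inv_into_into)
  fix a b assume "a \<in> \<phi> ` Q" "b \<in> \<phi> ` Q"
  then obtain x y where xy: "x \<in> Q" "y \<in> Q" "a = \<phi> x" "b = \<phi> y" by blast
  then have "a \<otimes>\<^bsub>G\<^esub> b = \<phi> (x \<otimes>\<^bsub>G\<^esub> y)" "x \<otimes>\<^bsub>G\<^esub> y \<in> Q"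
    using \<phi> subgroup.m_closed[OF Q] unfolding sub_hom_def by auto
  then show "restrict (inv_into Q \<phi>) (\<phi> ` Q) (a \<otimes>\<^bsub>G\<^esub> b)
      = restrict (inv_into Q \<phi>) (\<phi> ` Q) a \<otimes>\<^bsub>G\<^esub> restrict (inv_into Q \<phi>) (\<phi> ` Q) b"
    using xy inj by simp
qed

lemma compose_inv_into_cancel:
  assumes "\<alpha> \<in> sub_hom G P (\<phi> ` Q)"
  shows "compose P \<phi> (compose P (restrict (inv_into Q \<phi>) (\<phi> ` Q)) \<alpha>) = \<alpha>"
proof
  fix x show "compose P \<phi> (compose P (restrict (inv_into Q \<phi>) (\<phi> ` Q)) \<alpha>) x = \<alpha> x"
    using assms sub_hom_undefined[OF assms, of x] unfolding compose_def sub_hom_def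
    by (auto simp: f_inv_into_f)
qed

lemma compose_inv_into_left:
  assumes "\<alpha> \<in> sub_hom G P Q" "inj_on \<gamma> Q"
  shows "compose P (restrict (inv_into Q \<gamma>) (\<gamma> ` Q)) (compose P \<gamma> \<alpha>) = \<alpha>"
proof
  fix x show "compose P (restrict (inv_into Q \<gamma>) (\<gamma> ` Q)) (compose P \<gamma> \<alpha>) x = \<alpha> x"
  proof (cases "x \<in> P")
    case True
    then have "\<alpha> x \<in> Q" using sub_hom_image_subset[OF assms(1)] by blast
    with True assms(2) show ?thesis by (simp add: compose_eq)
  qed (simp add: compose_def sub_hom_undefined[OF assms(1)])
qed

lemma (in group) sub_hom_image_subgroup:
  assumes "subgroup P G" "\<alpha> \<in> sub_hom G P R" "R \<subseteq> carrier G"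
  shows "subgroup (\<alpha> ` P) G"
proof -
  interpret P: group "G\<lparr>carrier := P\<rparr>" by (rule subgroup.subgroup_is_group[OF assms(1) is_group])
  have "group_hom (G\<lparr>carrier := P\<rparr>) G \<alpha>"
    using assms(2,3) by unfold_locales (auto simp: hom_def sub_hom_def)
  from group_hom.img_is_subgroup[OF this] show ?thesis by simp
qed

section \<open>Fusion systems\<close>

lemma fusion_systemD:
  assumes F: "fusion_system G p T F" and \<phi>: "\<phi> \<in> F Q R"
  shows "\<phi> \<in> sub_hom G Q R" "inj_on \<phi> Q" "subgroup Q G" "Q \<subseteq> T" "subgroup R G" "R \<subseteq> T"
    "\<phi> \<in> F Q (\<phi> ` Q)" "restrict (inv_into Q \<phi>) (\<phi> ` Q) \<in> F (\<phi> ` Q) Q"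
proof -
  have "F Q R \<noteq> {}" using \<phi> by blast
  then show sg: "subgroup Q G" "Q \<subseteq> T" "subgroup R G" "R \<subseteq> T"
    using F unfolding fusion_system_def by simp_all
  have "F Q R \<subseteq> {\<phi> \<in> sub_hom G Q R. inj_on \<phi> Q}"
    using F sg unfolding fusion_system_def by simp
  then show "\<phi> \<in> sub_hom G Q R" "inj_on \<phi> Q" using \<phi> by blast+
  show "\<phi> \<in> F Q (\<phi> ` Q)" "restrict (inv_into Q \<phi>) (\<phi> ` Q) \<in> F (\<phi> ` Q) Q"
    using F \<phi> unfolding fusion_system_def by simp_all
qed

lemma fusion_systemI:
  assumes "p_group G p T"
    and "\<And>Q R \<phi>. \<phi> \<in> F Q R \<Longrightarrow> subgroup Q G \<and> Q \<subseteq> T \<and> subgroup R G \<and> R \<subseteq> T"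
    and "\<And>Q R. subgroup Q G \<Longrightarrow> Q \<subseteq> T \<Longrightarrow> subgroup R G \<Longrightarrow> R \<subseteq> T \<Longrightarrow> Hom_S G T Q R \<subseteq> F Q R"
    and "\<And>Q R \<phi>. \<phi> \<in> F Q R \<Longrightarrow> \<phi> \<in> sub_hom G Q R \<and> inj_on \<phi> Q"
    and "\<And>Q R \<phi>. \<phi> \<in> F Q R \<Longrightarrow> \<phi> \<in> F Q (\<phi> ` Q)"
    and "\<And>Q R \<phi>. \<phi> \<in> F Q R \<Longrightarrow> restrict (inv_into Q \<phi>) (\<phi> ` Q) \<in> F (\<phi> ` Q) Q"
    and "\<And>Q R U \<phi> \<psi>. \<phi> \<in> F Q R \<Longrightarrow> \<psi> \<in> F R U \<Longrightarrow> compose Q \<psi> \<phi> \<in> F Q U"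
  shows "fusion_system G p T F"
  unfolding fusion_system_def
proof (intro conjI allI impI)
  fix Q R assume "F Q R \<noteq> {}"
  then obtain \<phi> where "\<phi> \<in> F Q R" by blast
  from assms(2)[OF this] show "subgroup Q G" "Q \<subseteq> T" "subgroup R G" "R \<subseteq> T" by blast+
next
  fix Q R show "F Q R \<subseteq> {\<phi> \<in> sub_hom G Q R. inj_on \<phi> Q}" using assms(4) by blast
qed (use assms(1,3,5-7) in simp_all)

lemma fusion_system_compose:
  "fusion_system G p T F \<Longrightarrow> \<phi> \<in> F Q R \<Longrightarrow> \<psi> \<in> F R U \<Longrightarrow> compose Q \<psi> \<phi> \<in> F Q U"
  unfolding fusion_system_def by simp

lemma fusion_system_Hom_S:
  "fusion_system G p T F \<Longrightarrow> subgroup Q G \<Longrightarrow> Q \<subseteq> T \<Longrightarrow> subgroup R G \<Longrightarrow> R \<subseteq> T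
    \<Longrightarrow> Hom_S G T Q R \<subseteq> F Q R"
  unfolding fusion_system_def by simp

lemma fusion_system_subgroup: "fusion_system G p T F \<Longrightarrow> subgroup T G"
  unfolding fusion_system_def p_group_def by simp

context group
begin

lemma fusion_system_incl:
  assumes F: "fusion_system G p T F" and "subgroup Q G" "Q \<subseteq> R" "subgroup R G" "R \<subseteq> T"
  shows "restrict id Q \<in> F Q R"
proof -
  have "conjmap G \<one> Q = restrict id Q"
    unfolding conjmap_def by (rule restrict_ext) (use subgroup.subset[OF assms(2)] in auto)
  moreover have "conjmap G \<one> Q \<in> Hom_S G T Q R"
    using calculation assms(3) subgroup.one_closed[OF fusion_system_subgroup[OF F]]
    unfolding Hom_S_def by force
  ultimately show ?thesis using fusion_system_Hom_S[OF F] assms by fastforce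
qed

lemma fusion_system_codomain:
  assumes F: "fusion_system G p T F" and \<phi>: "\<phi> \<in> F Q R"
    and "\<phi> ` Q \<subseteq> R'" "subgroup R' G" "R' \<subseteq> T"
  shows "\<phi> \<in> F Q R'"
proof -
  have onto: "\<phi> \<in> F Q (\<phi> ` Q)" by (rule fusion_systemD(7)[OF F \<phi>])
  have "restrict id (\<phi> ` Q) \<in> F (\<phi> ` Q) R'"
    using fusion_system_incl[OF F fusion_systemD(5)[OF F onto]] assms(3-5) .
  from fusion_system_compose[OF F onto this] show ?thesis
    by (simp only: compose_restrict_id_left[OF fusion_systemD(1)[OF F \<phi>] order_refl])
qed

lemma fusion_system_restrict:
  assumes F: "fusion_system G p T F" and \<phi>: "\<phi> \<in> F Q R" and "subgroup A G" "A \<subseteq> Q"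
  shows "restrict \<phi> A \<in> F A (\<phi> ` A)"
proof -
  have "restrict id A \<in> F A Q"
    using fusion_system_incl[OF F assms(3,4) fusion_systemD(3,4)[OF F \<phi>]] .
  moreover have "compose A \<phi> (restrict id A) = restrict \<phi> A"
    unfolding compose_def by (rule restrict_ext) simp
  ultimately have "restrict \<phi> A \<in> F A R" using fusion_system_compose[OF F _ \<phi>] by metis
  from fusion_systemD(7)[OF F this] show ?thesis by (metis image_restrict_eq)
qed

end

lemma fusion_system_Inter:
  assumes F0: "fusion_system G p T F0" "C F0"
  shows "fusion_system G p T (\<lambda>Q R. \<Inter> {F Q R | F. fusion_system G p T F \<and> C F})"
    (is "fusion_system G p T ?FI")
proof (rule fusion_systemI)
  have mem: "\<phi> \<in> ?FI Q R \<longleftrightarrow> (\<forall>F. fusion_system G p T F \<and> C F \<longrightarrow> \<phi> \<in> F Q R)" for \<phi> Q R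
    by blast
  have sub: "\<phi> \<in> ?FI Q R \<Longrightarrow> \<phi> \<in> F0 Q R" for \<phi> Q R using F0 by blast
  show "p_group G p T" using F0(1) unfolding fusion_system_def by blast
  show "subgroup Q G \<and> Q \<subseteq> T \<and> subgroup R G \<and> R \<subseteq> T" "\<phi> \<in> sub_hom G Q R \<and> inj_on \<phi> Q"
    if "\<phi> \<in> ?FI Q R" for Q R \<phi>
    using fusion_systemD(1-6)[OF F0(1) sub[OF that]] by blast+
  show "Hom_S G T Q R \<subseteq> ?FI Q R"
    if "subgroup Q G" "Q \<subseteq> T" "subgroup R G" "R \<subseteq> T" for Q R
    using fusion_system_Hom_S that by blast
  show "\<phi> \<in> ?FI Q (\<phi> ` Q)" "restrict (inv_into Q \<phi>) (\<phi> ` Q) \<in> ?FI (\<phi> ` Q) Q"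
    if "\<phi> \<in> ?FI Q R" for Q R \<phi>
    using that unfolding mem using fusion_systemD(7,8) by blast+
  show "compose Q \<psi> \<phi> \<in> ?FI Q U" if "\<phi> \<in> ?FI Q R" "\<psi> \<in> ?FI R U" for Q R U \<phi> \<psi>
    using that unfolding mem using fusion_system_compose by blast
qed

lemma completion_contains: "v \<in> V \<Longrightarrow> FV v Q (SV v) \<subseteq> completion G p S V SV FV Q (SV v)"
  unfolding completion_def by blast

lemma
  assumes "fusion_system G p S F" "\<forall>v\<in>V. \<forall>Q. FV v Q (SV v) \<subseteq> F Q (SV v)"
  shows fusion_system_completion: "fusion_system G p S (completion G p S V SV FV)"
    and completion_least: "completion G p S V SV FV Q R \<subseteq> F Q R"
proof -
  show "fusion_system G p S (completion G p S V SV FV)"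
    unfolding completion_def
    by (rule fusion_system_Inter[where C = "\<lambda>F. \<forall>v\<in>V. \<forall>Q. FV v Q (SV v) \<subseteq> F Q (SV v)", OF assms])
  show "completion G p S V SV FV Q R \<subseteq> F Q R"
    unfolding completion_def using assms by blast
qed

section \<open>The relation defining Rep(P, F)\<close>

lemma rep_rel_iff:
  "(\<alpha>, \<beta>) \<in> rep_rel G F P T \<longleftrightarrow> \<alpha> \<in> sub_hom G P T \<and> \<beta> \<in> sub_hom G P T \<and>
     (\<exists>\<gamma> \<in> F (\<alpha> ` P) (\<beta> ` P). bij_betw \<gamma> (\<alpha> ` P) (\<beta> ` P) \<and> compose P \<gamma> \<alpha> = \<beta>)"
  unfolding rep_rel_def iso_in_def by blast

context group
begin

lemma rep_rel_compose:
  assumes F: "fusion_system G p T F" and \<phi>: "\<phi> \<in> F Q R" and \<alpha>: "\<alpha> \<in> sub_hom G P Q"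
    and P: "subgroup P G" and "Q \<subseteq> T'" "R \<subseteq> T'"
  shows "(\<alpha>, compose P \<phi> \<alpha>) \<in> rep_rel G F P T'"
proof -
  have AQ: "\<alpha> ` P \<subseteq> Q" by (rule sub_hom_image_subset[OF \<alpha>])
  have A: "subgroup (\<alpha> ` P) G"
    using sub_hom_image_subgroup[OF P \<alpha> subgroup.subset[OF fusion_systemD(3)[OF F \<phi>]]] .
  have im: "compose P \<phi> \<alpha> ` P = \<phi> ` \<alpha> ` P" unfolding compose_def by auto
  have "restrict \<phi> (\<alpha> ` P) \<in> F (\<alpha> ` P) (compose P \<phi> \<alpha> ` P)"
    unfolding im by (rule fusion_system_restrict[OF F \<phi> A AQ])
  moreover have "bij_betw (restrict \<phi> (\<alpha> ` P)) (\<alpha> ` P) (compose P \<phi> \<alpha> ` P)"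
    unfolding im using inj_on_subset[OF fusion_systemD(2)[OF F \<phi>] AQ]
    by (simp add: inj_on_imp_bij_betw)
  moreover have "compose P (restrict \<phi> (\<alpha> ` P)) \<alpha> = compose P \<phi> \<alpha>"
    unfolding compose_def by (rule restrict_ext) simp
  moreover have "\<alpha> \<in> sub_hom G P T'" "compose P \<phi> \<alpha> \<in> sub_hom G P T'"
    using sub_hom_mono assms(5,6) \<alpha> sub_hom_compose[OF \<alpha> fusion_systemD(1)[OF F \<phi>] P] by blast+
  ultimately show ?thesis unfolding rep_rel_iff by blast
qed

lemma rep_rel_refl:
  assumes F: "fusion_system G p T F" and \<alpha>: "\<alpha> \<in> sub_hom G P T'" and P: "subgroup P G"
    and "T' \<subseteq> T"
  shows "(\<alpha>, \<alpha>) \<in> rep_rel G F P T'"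
proof -
  have "T' \<subseteq> carrier G" using assms(4) subgroup.subset[OF fusion_system_subgroup[OF F]] by blast
  then have A: "subgroup (\<alpha> ` P) G" by (rule sub_hom_image_subgroup[OF P \<alpha>])
  have AT: "\<alpha> ` P \<subseteq> T'" by (rule sub_hom_image_subset[OF \<alpha>])
  have "restrict id (\<alpha> ` P) \<in> F (\<alpha> ` P) (\<alpha> ` P)"
    using fusion_system_incl[OF F A order_refl A] AT assms(4) by blast
  from rep_rel_compose[OF F this sub_hom_onto_image[OF \<alpha>] P AT AT] show ?thesis
    by (simp only: compose_restrict_id_left[OF \<alpha> order_refl])
qed

lemma rep_rel_sym:
  assumes F: "fusion_system G p T F" and r: "(\<alpha>, \<beta>) \<in> rep_rel G F P T'"
  shows "(\<beta>, \<alpha>) \<in> rep_rel G F P T'"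
proof -
  obtain \<gamma> where \<gamma>: "\<gamma> \<in> F (\<alpha> ` P) (\<beta> ` P)" "bij_betw \<gamma> (\<alpha> ` P) (\<beta> ` P)" "compose P \<gamma> \<alpha> = \<beta>"
    using r unfolding rep_rel_iff by blast
  have im: "\<gamma> ` \<alpha> ` P = \<beta> ` P" using bij_betw_imp_surj_on[OF \<gamma>(2)] .
  define \<gamma>' where "\<gamma>' = restrict (inv_into (\<alpha> ` P) \<gamma>) (\<gamma> ` \<alpha> ` P)"
  have "\<gamma>' \<in> F (\<beta> ` P) (\<alpha> ` P)"
    using fusion_systemD(8)[OF F \<gamma>(1)] unfolding \<gamma>'_def im .
  moreover have "bij_betw \<gamma>' (\<beta> ` P) (\<alpha> ` P)"
    unfolding \<gamma>'_def using bij_betw_inv_into[OF \<gamma>(2)] im by simp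
  moreover have "compose P \<gamma>' \<beta> = \<alpha>"
    using compose_inv_into_left[OF sub_hom_onto_image bij_betw_imp_inj_on[OF \<gamma>(2)]] r
    unfolding \<gamma>'_def \<gamma>(3)[symmetric] rep_rel_iff by blast
  ultimately show ?thesis using r unfolding rep_rel_iff by blast
qed

lemma rep_rel_trans:
  assumes F: "fusion_system G p T F"
    and r: "(\<alpha>, \<beta>) \<in> rep_rel G F P T'" and s: "(\<beta>, \<delta>) \<in> rep_rel G F P T'"
  shows "(\<alpha>, \<delta>) \<in> rep_rel G F P T'"
proof -
  obtain \<gamma> where \<gamma>: "\<gamma> \<in> F (\<alpha> ` P) (\<beta> ` P)" "bij_betw \<gamma> (\<alpha> ` P) (\<beta> ` P)" "compose P \<gamma> \<alpha> = \<beta>"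
    using r unfolding rep_rel_iff by blast
  obtain \<eta> where \<eta>: "\<eta> \<in> F (\<beta> ` P) (\<delta> ` P)" "bij_betw \<eta> (\<beta> ` P) (\<delta> ` P)" "compose P \<eta> \<beta> = \<delta>"
    using s unfolding rep_rel_iff by blast
  have "\<alpha> \<in> P \<rightarrow> \<alpha> ` P" by blast
  then have "compose P (compose (\<alpha> ` P) \<eta> \<gamma>) \<alpha> = \<delta>"
    using compose_assoc \<gamma>(3) \<eta>(3) by metis
  then show ?thesis
    using r s fusion_system_compose[OF F \<gamma>(1) \<eta>(1)] bij_betw_compose[OF \<gamma>(2) \<eta>(2)]
    unfolding rep_rel_iff by blast
qed

lemma rep_rel_equiv:
  assumes "fusion_system G p T F" "subgroup P G" "T' \<subseteq> T"
  shows "equiv (sub_hom G P T') (rep_rel G F P T')"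
proof (rule equivI)
  show "rep_rel G F P T' \<subseteq> sub_hom G P T' \<times> sub_hom G P T'" unfolding rep_rel_def by blast
  show "refl_on (sub_hom G P T') (rep_rel G F P T')"
    using rep_rel_refl[OF assms(1) _ assms(2,3)] unfolding refl_on_def rep_rel_def by blast
  show "sym (rep_rel G F P T')" using rep_rel_sym[OF assms(1)] by (rule symI)
  show "trans (rep_rel G F P T')" using rep_rel_trans[OF assms(1)] by (rule transI)
qed

lemma rep_cls_eq_iff:
  assumes "fusion_system G p T F" "subgroup P G" "T' \<subseteq> T"
    and "\<alpha> \<in> sub_hom G P T'" "\<beta> \<in> sub_hom G P T'"
  shows "rep_cls G F P T' \<alpha> = rep_cls G F P T' \<beta> \<longleftrightarrow> (\<alpha>, \<beta>) \<in> rep_rel G F P T'"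
  unfolding rep_cls_def using eq_equiv_class_iff[OF rep_rel_equiv[OF assms(1-3)] assms(4,5)] .

lemma rep_rel_incl_iff:
  assumes F: "fusion_system G p T F" and P: "subgroup P G" "P \<subseteq> T"
    and R: "subgroup R G" "R \<subseteq> T" and \<beta>: "\<beta> \<in> sub_hom G P R"
  shows "(restrict id P, \<beta>) \<in> rep_rel G F P T \<longleftrightarrow> \<beta> \<in> F P R"
proof
  assume "(restrict id P, \<beta>) \<in> rep_rel G F P T"
  then obtain \<gamma> where \<gamma>: "\<gamma> \<in> F P (\<beta> ` P)" "compose P \<gamma> (restrict id P) = \<beta>"
    unfolding rep_rel_iff by auto
  then have "\<gamma> = \<beta>" using compose_restrict_id_right[OF fusion_systemD(1)[OF F \<gamma>(1)]] by simp
  with \<gamma>(1) show "\<beta> \<in> F P R"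
    using fusion_system_codomain[OF F _ sub_hom_image_subset[OF \<beta>] R] by blast
next
  assume \<beta>F: "\<beta> \<in> F P R"
  have "(restrict id P, compose P \<beta> (restrict id P)) \<in> rep_rel G F P T"
    by (rule rep_rel_compose[OF F \<beta>F restrict_id_sub_hom[OF P(1) order_refl] P(1) P(2) R(2)])
  then show "(restrict id P, \<beta>) \<in> rep_rel G F P T"
    by (simp only: compose_restrict_id_right[OF \<beta>])
qed

end

definition preserving_homs ::
  "('a,'b) monoid_scheme \<Rightarrow> 'a set \<Rightarrow> 'a set \<Rightarrow> (('a \<Rightarrow> 'a) \<times> ('a \<Rightarrow> 'a)) set
   \<Rightarrow> 'a set \<Rightarrow> 'a set \<Rightarrow> ('a \<Rightarrow> 'a) set" where
  "preserving_homs G S P K Q R = {\<phi> \<in> sub_hom G Q R. inj_on \<phi> Q \<and>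
     subgroup Q G \<and> Q \<subseteq> S \<and> subgroup R G \<and> R \<subseteq> S \<and>
     (\<forall>\<alpha> \<in> sub_hom G P Q. (\<alpha>, compose P \<phi> \<alpha>) \<in> K)}"

lemma preserving_homsD:
  assumes "\<phi> \<in> preserving_homs G S P K Q R"
  shows "\<phi> \<in> sub_hom G Q R" "inj_on \<phi> Q" "subgroup Q G" "Q \<subseteq> S" "subgroup R G" "R \<subseteq> S"
    "\<And>\<alpha>. \<alpha> \<in> sub_hom G P Q \<Longrightarrow> (\<alpha>, compose P \<phi> \<alpha>) \<in> K"
  using assms unfolding preserving_homs_def by blast+

context group
begin

lemma Hom_S_preserving:
  assumes F: "fusion_system G p S F" and P: "subgroup P G" and K: "rep_rel G F P S \<subseteq> K"
    and QR: "subgroup Q G" "Q \<subseteq> S" "subgroup R G" "R \<subseteq> S"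
  shows "Hom_S G S Q R \<subseteq> preserving_homs G S P K Q R"
proof
  fix \<phi> assume "\<phi> \<in> Hom_S G S Q R"
  then have \<phi>: "\<phi> \<in> F Q R" using fusion_system_Hom_S[OF F QR] by blast
  have "(\<alpha>, compose P \<phi> \<alpha>) \<in> K" if "\<alpha> \<in> sub_hom G P Q" for \<alpha>
    using rep_rel_compose[OF F \<phi> that P QR(2,4)] K by blast
  then show "\<phi> \<in> preserving_homs G S P K Q R"
    unfolding preserving_homs_def using fusion_systemD(1,2)[OF F \<phi>] QR by blast
qed

lemma preserving_homs_image:
  assumes "\<phi> \<in> preserving_homs G S P K Q R"
  shows "subgroup (\<phi> ` Q) G" "\<phi> ` Q \<subseteq> S" "\<phi> \<in> preserving_homs G S P K Q (\<phi> ` Q)"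
proof -
  note \<phi> = preserving_homsD[OF assms]
  show "subgroup (\<phi> ` Q) G"
    using sub_hom_image_subgroup[OF \<phi>(3,1) subgroup.subset[OF \<phi>(5)]] .
  show "\<phi> ` Q \<subseteq> S" using sub_hom_image_subset[OF \<phi>(1)] \<phi>(6) by blast
  with assms \<open>subgroup (\<phi> ` Q) G\<close> show "\<phi> \<in> preserving_homs G S P K Q (\<phi> ` Q)"
    using sub_hom_onto_image unfolding preserving_homs_def by blast
qed

lemma preserving_homs_inv:
  assumes \<phi>: "\<phi> \<in> preserving_homs G S P K Q R" and P: "subgroup P G" and K: "sym K"
  shows "restrict (inv_into Q \<phi>) (\<phi> ` Q) \<in> preserving_homs G S P K (\<phi> ` Q) Q"
proof -
  let ?\<psi> = "restrict (inv_into Q \<phi>) (\<phi> ` Q)"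
  note \<phi>D = preserving_homsD[OF \<phi>]
  have \<psi>: "?\<psi> \<in> sub_hom G (\<phi> ` Q) Q" by (rule sub_hom_inv_into[OF \<phi>D(1-3)])
  have "(\<alpha>, compose P ?\<psi> \<alpha>) \<in> K" if \<alpha>: "\<alpha> \<in> sub_hom G P (\<phi> ` Q)" for \<alpha>
  proof -
    have "(compose P ?\<psi> \<alpha>, compose P \<phi> (compose P ?\<psi> \<alpha>)) \<in> K"
      by (rule \<phi>D(7)[OF sub_hom_compose[OF \<alpha> \<psi> P]])
    then show ?thesis using K compose_inv_into_cancel[OF \<alpha>] by (metis symD)
  qed
  moreover have "inj_on ?\<psi> (\<phi> ` Q)" by (simp add: inj_on_inv_into)
  ultimately show ?thesis
    using \<psi> \<phi>D(3,4) preserving_homs_image[OF \<phi>] unfolding preserving_homs_def by blast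
qed

lemma preserving_homs_compose:
  assumes \<phi>: "\<phi> \<in> preserving_homs G S P K Q R" and \<psi>: "\<psi> \<in> preserving_homs G S P K R U"
    and P: "subgroup P G" and K: "trans K"
  shows "compose Q \<psi> \<phi> \<in> preserving_homs G S P K Q U"
proof -
  note \<phi>D = preserving_homsD[OF \<phi>] and \<psi>D = preserving_homsD[OF \<psi>]
  have "inj_on (compose Q \<psi> \<phi>) Q"
    using \<phi>D(2) inj_on_subset[OF \<psi>D(2) sub_hom_image_subset[OF \<phi>D(1)]]
    unfolding compose_def by (auto simp: inj_on_def)
  moreover have "(\<alpha>, compose P (compose Q \<psi> \<phi>) \<alpha>) \<in> K" if \<alpha>: "\<alpha> \<in> sub_hom G P Q" for \<alpha>
  proof -
    have "(\<alpha>, compose P \<phi> \<alpha>) \<in> K" "(compose P \<phi> \<alpha>, compose P \<psi> (compose P \<phi> \<alpha>)) \<in> K"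
      using \<phi>D(7)[OF \<alpha>] \<psi>D(7)[OF sub_hom_compose[OF \<alpha> \<phi>D(1) P]] .
    moreover have "\<alpha> \<in> P \<rightarrow> Q" using sub_hom_image_subset[OF \<alpha>] by blast
    ultimately show ?thesis using K compose_assoc by (metis transD)
  qed
  ultimately show ?thesis
    using sub_hom_compose[OF \<phi>D(1) \<psi>D(1) \<phi>D(3)] \<phi>D(3,4) \<psi>D(5,6)
    unfolding preserving_homs_def by blast
qed

lemma fusion_system_preserving_homs:
  assumes F: "fusion_system G p S F" and P: "subgroup P G"
    and K: "rep_rel G F P S \<subseteq> K" "sym K" "trans K"
  shows "fusion_system G p S (preserving_homs G S P K)"
proof (rule fusion_systemI)
  show "p_group G p S" using F unfolding fusion_system_def by blast
  show "subgroup Q G \<and> Q \<subseteq> S \<and> subgroup R G \<and> R \<subseteq> S" "\<phi> \<in> sub_hom G Q R \<and> inj_on \<phi> Q"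
    if "\<phi> \<in> preserving_homs G S P K Q R" for Q R \<phi>
    using preserving_homsD[OF that] by blast+
  show "Hom_S G S Q R \<subseteq> preserving_homs G S P K Q R"
    if "subgroup Q G" "Q \<subseteq> S" "subgroup R G" "R \<subseteq> S" for Q R
    by (rule Hom_S_preserving[OF F P K(1) that])
  show "\<phi> \<in> preserving_homs G S P K Q (\<phi> ` Q)"
    if "\<phi> \<in> preserving_homs G S P K Q R" for Q R \<phi>
    by (rule preserving_homs_image(3)[OF that])
  show "restrict (inv_into Q \<phi>) (\<phi> ` Q) \<in> preserving_homs G S P K (\<phi> ` Q) Q"
    if "\<phi> \<in> preserving_homs G S P K Q R" for Q R \<phi>
    by (rule preserving_homs_inv[OF that P K(2)])
  show "compose Q \<psi> \<phi> \<in> preserving_homs G S P K Q U"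
    if "\<phi> \<in> preserving_homs G S P K Q R" "\<psi> \<in> preserving_homs G S P K R U" for Q R U \<phi> \<psi>
    by (rule preserving_homs_compose[OF that P K(3)])
qed

end

section \<open>Trees of fusion systems\<close>

lemma tree_dist_decreasing_neighbour:
  assumes "(v, u) \<in> (undir E)\<^sup>*" "v \<noteq> u"
  shows "\<exists>w. (v, w) \<in> undir E \<and> tree_dist E w u < tree_dist E v u"
proof -
  obtain n where "(v, u) \<in> undir E ^^ n" using assms(1) rtrancl_power by blast
  then have d: "(v, u) \<in> undir E ^^ tree_dist E v u" unfolding tree_dist_def by (rule LeastI)
  then obtain m where m: "tree_dist E v u = Suc m" using assms(2) by (cases "tree_dist E v u") auto
  then obtain w where "(v, w) \<in> undir E" "(w, u) \<in> undir E ^^ m" using d relpow_Suc_D2 by metis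
  moreover from this(2) have "tree_dist E w u \<le> m" unfolding tree_dist_def by (rule Least_le)
  ultimately show ?thesis using m by auto
qed

locale fusion_tree = group G for G :: "('a,'b) monoid_scheme" (structure) +
  fixes p :: nat and V :: "'v set" and E :: "('v \<times> 'v) set"
    and SV :: "'v \<Rightarrow> 'a set" and SE :: "'v \<times> 'v \<Rightarrow> 'a set"
    and FV :: "'v \<Rightarrow> 'a set \<Rightarrow> 'a set \<Rightarrow> ('a \<Rightarrow> 'a) set"
    and FE :: "'v \<times> 'v \<Rightarrow> 'a set \<Rightarrow> 'a set \<Rightarrow> ('a \<Rightarrow> 'a) set"
    and vs :: 'v and P :: "'a set"
  assumes tree: "fin_tree V E"
    and vs: "vs \<in> V"
    and FVfs: "\<forall>v\<in>V. fusion_system G p (SV v) (FV v)"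
    and FEfs: "\<forall>e\<in>E. fusion_system G p (SE e) (FE e)"
    and edge_sub: "\<forall>v w. (v, w) \<in> E \<longrightarrow> SE (v, w) \<subseteq> SV v \<and> SE (v, w) \<subseteq> SV w"
    and H: "hyp_H V E SV SE vs"
    and P: "subgroup P G" and P_sub: "P \<subseteq> SV vs"
begin

abbreviation "FT \<equiv> completion G p (SV vs) V SV FV"

abbreviation "vert v \<alpha> \<equiv> (v, rep_cls G (FV v) P (SV v) \<alpha>)"

abbreviation "adj \<equiv> orbit_adj G E SV SE FV FE P"

abbreviation "conn \<equiv> orbit_conn G E SV SE FV FE P"

lemma fusion_system_FV: "v \<in> V \<Longrightarrow> fusion_system G p (SV v) (FV v)"
  using FVfs by blast

lemma fusion_system_FE: "e \<in> E \<Longrightarrow> fusion_system G p (SE e) (FE e)"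
  using FEfs by blast

lemma edge_vertices: "(v, w) \<in> E \<Longrightarrow> v \<in> V \<and> w \<in> V"
  using tree unfolding fin_tree_def by blast

lemma edge_group_sub: "(v, w) \<in> E \<Longrightarrow> SE (v, w) \<subseteq> SV v \<and> SE (v, w) \<subseteq> SV w"
  using edge_sub by blast

lemma conn_equiv: "equiv UNIV conn"
proof -
  have "sym (undir adj)" unfolding undir_def sym_def by blast
  then show ?thesis
    unfolding orbit_conn_def by (simp add: equivI refl_rtrancl sym_rtrancl trans_rtrancl)
qed

lemma conn_sym: "(x, y) \<in> conn \<Longrightarrow> (y, x) \<in> conn"
  using conn_equiv unfolding equiv_def by (blast dest: symD)

lemma conn_trans: "(x, y) \<in> conn \<Longrightarrow> (y, z) \<in> conn \<Longrightarrow> (x, z) \<in> conn"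
  using conn_equiv unfolding equiv_def by (blast dest: transD)

lemma edge_conn:
  assumes e: "(v, w) \<in> E" and \<alpha>: "\<alpha> \<in> sub_hom G P (SE (v, w))"
  shows "(vert v \<alpha>, vert w \<alpha>) \<in> conn"
proof -
  let ?c = "rep_cls G (FE (v, w)) P (SE (v, w)) \<alpha>"
  have "((v, w), ?c) \<in> orbit_edges G E SE FE P"
    unfolding orbit_edges_def Rep_def rep_cls_def using e \<alpha> by (simp add: quotientI)
  moreover have "\<alpha> \<in> ?c"
    using rep_rel_refl[OF fusion_system_FE[OF e] \<alpha> P order_refl] unfolding rep_cls_def by blast
  ultimately have "(vert v \<alpha>, vert w \<alpha>) \<in> adj" unfolding orbit_adj_def by blast
  then show ?thesis unfolding orbit_conn_def undir_def by blast
qed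

lemma step_towards_root:
  assumes v: "v \<in> V" "v \<noteq> vs"
  obtains w where "w \<in> V" "tree_dist E w vs < tree_dist E v vs" "SV v \<subseteq> SV w"
    "\<And>\<alpha>. \<alpha> \<in> sub_hom G P (SV v) \<Longrightarrow> (vert v \<alpha>, vert w \<alpha>) \<in> conn"
proof -
  have "(v, vs) \<in> (undir E)\<^sup>*" using tree v(1) vs unfolding fin_tree_def by blast
  then obtain w where w: "(v, w) \<in> undir E" "tree_dist E w vs < tree_dist E v vs"
    using tree_dist_decreasing_neighbour[OF _ v(2)] by blast
  then have "(v, w) \<in> E \<and> SE (v, w) = SV v \<or> (w, v) \<in> E \<and> SE (w, v) = SV v"
    using H v unfolding hyp_H_def undir_def by blast
  then show ?thesis
  proof (elim disjE conjE)
    assume e: "(v, w) \<in> E" "SE (v, w) = SV v"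
    show ?thesis
    proof (rule that)
      show "w \<in> V" using edge_vertices[OF e(1)] by blast
      show "SV v \<subseteq> SV w" using edge_group_sub[OF e(1)] e(2) by simp
      show "(vert v \<alpha>, vert w \<alpha>) \<in> conn" if "\<alpha> \<in> sub_hom G P (SV v)" for \<alpha>
        using edge_conn[OF e(1)] that e(2) by simp
    qed (rule w(2))
  next
    assume e: "(w, v) \<in> E" "SE (w, v) = SV v"
    show ?thesis
    proof (rule that)
      show "w \<in> V" using edge_vertices[OF e(1)] by blast
      show "SV v \<subseteq> SV w" using edge_group_sub[OF e(1)] e(2) by simp
      show "(vert v \<alpha>, vert w \<alpha>) \<in> conn" if "\<alpha> \<in> sub_hom G P (SV v)" for \<alpha>
        using conn_sym[OF edge_conn[OF e(1)]] that e(2) by simp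
    qed (rule w(2))
  qed
qed

lemma path_to_root:
  assumes "v \<in> V"
  shows "SV v \<subseteq> SV vs \<and> (\<forall>\<alpha> \<in> sub_hom G P (SV v). (vert vs \<alpha>, vert v \<alpha>) \<in> conn)"
  using assms
proof (induction "tree_dist E v vs" arbitrary: v rule: less_induct)
  case (less v)
  show ?case
  proof (cases "v = vs")
    case True
    then show ?thesis using conn_equiv unfolding equiv_def refl_on_def by blast
  next
    case False
    obtain w where w: "w \<in> V" "tree_dist E w vs < tree_dist E v vs" "SV v \<subseteq> SV w"
      "\<And>\<alpha>. \<alpha> \<in> sub_hom G P (SV v) \<Longrightarrow> (vert v \<alpha>, vert w \<alpha>) \<in> conn"
      using step_towards_root[OF less.prems False] by blast
    have IH: "SV w \<subseteq> SV vs" "\<And>\<alpha>. \<alpha> \<in> sub_hom G P (SV w) \<Longrightarrow> (vert vs \<alpha>, vert w \<alpha>) \<in> conn"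
      using less.hyps[OF w(2,1)] by blast+
    have "(vert vs \<alpha>, vert v \<alpha>) \<in> conn" if \<alpha>: "\<alpha> \<in> sub_hom G P (SV v)" for \<alpha>
      using conn_trans[OF IH(2) conn_sym[OF w(4)[OF \<alpha>]]] sub_hom_mono[OF w(3)] \<alpha> by blast
    with IH(1) w(3) show ?thesis by blast
  qed
qed

lemma SV_sub_root: "v \<in> V \<Longrightarrow> SV v \<subseteq> SV vs"
  using path_to_root by blast

lemma conn_root: "v \<in> V \<Longrightarrow> \<alpha> \<in> sub_hom G P (SV v) \<Longrightarrow> (vert vs \<alpha>, vert v \<alpha>) \<in> conn"
  using path_to_root by blast

abbreviation "conn_at_root \<equiv> {(\<alpha>, \<beta>). (vert vs \<alpha>, vert vs \<beta>) \<in> conn}"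

lemma FV_preserving:
  "\<forall>v\<in>V. \<forall>Q. FV v Q (SV v) \<subseteq> preserving_homs G (SV vs) P conn_at_root Q (SV v)"
proof (intro ballI allI subsetI)
  fix v Q \<phi> assume v: "v \<in> V" and \<phi>: "\<phi> \<in> FV v Q (SV v)"
  note F = fusion_system_FV[OF v]
  have "(\<alpha>, compose P \<phi> \<alpha>) \<in> conn_at_root" if \<alpha>: "\<alpha> \<in> sub_hom G P Q" for \<alpha>
  proof -
    have \<alpha>v: "\<alpha> \<in> sub_hom G P (SV v)" using sub_hom_mono[OF fusion_systemD(4)[OF F \<phi>]] \<alpha> by blast
    have \<beta>v: "compose P \<phi> \<alpha> \<in> sub_hom G P (SV v)"
      by (rule sub_hom_compose[OF \<alpha> fusion_systemD(1)[OF F \<phi>] P])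
    have "(\<alpha>, compose P \<phi> \<alpha>) \<in> rep_rel G (FV v) P (SV v)"
      by (rule rep_rel_compose[OF F \<phi> \<alpha> P fusion_systemD(4)[OF F \<phi>] order_refl])
    then have "vert v \<alpha> = vert v (compose P \<phi> \<alpha>)"
      using rep_cls_eq_iff[OF F P order_refl \<alpha>v \<beta>v] by simp
    then show ?thesis
      using conn_trans[OF conn_root[OF v \<alpha>v]] conn_sym[OF conn_root[OF v \<beta>v]] by simp
  qed
  then show "\<phi> \<in> preserving_homs G (SV vs) P conn_at_root Q (SV v)"
    unfolding preserving_homs_def using fusion_systemD[OF F \<phi>] SV_sub_root[OF v] by blast
qed

lemma fusion_system_preserving_conn:
  "fusion_system G p (SV vs) (preserving_homs G (SV vs) P conn_at_root)"
proof (rule fusion_system_preserving_homs[OF fusion_system_FV[OF vs] P])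
  show "rep_rel G (FV vs) P (SV vs) \<subseteq> conn_at_root"
  proof (rule subrelI)
    fix \<alpha> \<beta> assume r: "(\<alpha>, \<beta>) \<in> rep_rel G (FV vs) P (SV vs)"
    then have "\<alpha> \<in> sub_hom G P (SV vs)" "\<beta> \<in> sub_hom G P (SV vs)" unfolding rep_rel_def by blast+
    with r have "vert vs \<alpha> = vert vs \<beta>"
      using rep_cls_eq_iff[OF fusion_system_FV[OF vs] P order_refl] by simp
    then show "(\<alpha>, \<beta>) \<in> conn_at_root"
      using conn_equiv unfolding equiv_def refl_on_def by simp
  qed
  show "sym conn_at_root" using conn_sym by (auto intro: symI)
  show "trans conn_at_root" using conn_trans by (auto intro: transI)
qed

lemma fusion_system_FT: "fusion_system G p (SV vs) FT"
  by (rule fusion_system_completion[where V = V and SV = SV and FV = FV,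
        OF fusion_system_preserving_conn FV_preserving])

lemma FT_preserving: "FT Q R \<subseteq> preserving_homs G (SV vs) P conn_at_root Q R"
  by (rule completion_least[where V = V and SV = SV and FV = FV,
        OF fusion_system_preserving_conn FV_preserving])

lemma FV_rel_imp_FT_rel:
  assumes v: "v \<in> V" and r: "(\<alpha>, \<beta>) \<in> rep_rel G (FV v) P (SV v)"
  shows "(\<alpha>, \<beta>) \<in> rep_rel G FT P (SV vs)"
proof -
  note F = fusion_system_FV[OF v]
  obtain \<gamma> where \<gamma>: "\<gamma> \<in> FV v (\<alpha> ` P) (\<beta> ` P)" "bij_betw \<gamma> (\<alpha> ` P) (\<beta> ` P)" "compose P \<gamma> \<alpha> = \<beta>"
    using r unfolding rep_rel_iff by blast
  have im: "\<gamma> ` \<alpha> ` P = \<beta> ` P" by (rule bij_betw_imp_surj_on[OF \<gamma>(2)])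
  have "\<gamma> \<in> FV v (\<alpha> ` P) (SV v)"
    using fusion_system_codomain[OF F \<gamma>(1)] fusion_systemD(6)[OF F \<gamma>(1)]
      fusion_system_subgroup[OF F] im by blast
  then have "\<gamma> \<in> FT (\<alpha> ` P) (SV v)" using completion_contains[OF v] by blast
  then have "\<gamma> \<in> FT (\<alpha> ` P) (\<beta> ` P)"
    using fusion_system_codomain[OF fusion_system_FT] fusion_systemD(5,6)[OF F \<gamma>(1)]
      SV_sub_root[OF v] im by blast
  moreover have "\<alpha> \<in> sub_hom G P (SV vs)" "\<beta> \<in> sub_hom G P (SV vs)"
    using r sub_hom_mono[OF SV_sub_root[OF v]] unfolding rep_rel_def by blast+
  ultimately show ?thesis using \<gamma>(2,3) unfolding rep_rel_iff by blast
qed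

lemma same_vertex_imp_FT_rel:
  assumes "vert v \<alpha> = vert w \<beta>" "v \<in> V" "\<alpha> \<in> sub_hom G P (SV v)" "\<beta> \<in> sub_hom G P (SV w)"
  shows "(\<alpha>, \<beta>) \<in> rep_rel G FT P (SV vs)"
proof -
  have "w = v" using assms(1) by simp
  with assms have "(\<alpha>, \<beta>) \<in> rep_rel G (FV v) P (SV v)"
    using rep_cls_eq_iff[OF fusion_system_FV P order_refl] by simp
  then show ?thesis by (rule FV_rel_imp_FT_rel[OF assms(2)])
qed

lemma orbit_edgeD:
  assumes "((v, w), c) \<in> orbit_edges G E SE FE P" "\<gamma> \<in> c"
  shows "(v, w) \<in> E" "\<gamma> \<in> sub_hom G P (SE (v, w))"
    "c = rep_cls G (FE (v, w)) P (SE (v, w)) \<gamma>"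
proof -
  show e: "(v, w) \<in> E" using assms(1) unfolding orbit_edges_def by blast
  have "c \<in> sub_hom G P (SE (v, w)) // rep_rel G (FE (v, w)) P (SE (v, w))"
    using assms(1) unfolding orbit_edges_def Rep_def by blast
  then obtain \<delta> where "c = rep_cls G (FE (v, w)) P (SE (v, w)) \<delta>"
    "\<delta> \<in> sub_hom G P (SE (v, w))"
    unfolding rep_cls_def by (rule quotientE)
  with assms(2) show "\<gamma> \<in> sub_hom G P (SE (v, w))" "c = rep_cls G (FE (v, w)) P (SE (v, w)) \<gamma>"
    using rep_cls_eq_iff[OF fusion_system_FE[OF e] P order_refl] unfolding rep_cls_def rep_rel_def
    by auto
qed

lemma orbit_step_cases:
  assumes "(x, y) \<in> undir adj"
  obtains v w \<gamma> where "v \<in> V" "w \<in> V" "\<gamma> \<in> sub_hom G P (SV v)" "\<gamma> \<in> sub_hom G P (SV w)"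
    "x = vert v \<gamma>" "y = vert w \<gamma>"
proof -
  have edge: "\<exists>v w \<gamma>. v \<in> V \<and> w \<in> V \<and> \<gamma> \<in> sub_hom G P (SV v) \<and> \<gamma> \<in> sub_hom G P (SV w) \<and>
      a = vert v \<gamma> \<and> b = vert w \<gamma>" if ab: "(a, b) \<in> adj" for a b
  proof -
    obtain v w c \<gamma> where "((v, w), c) \<in> orbit_edges G E SE FE P" "\<gamma> \<in> c"
      "a = vert v \<gamma>" "b = vert w \<gamma>"
      using ab unfolding orbit_adj_def by blast
    moreover note e = orbit_edgeD[OF this(1,2)]
    ultimately show ?thesis
      using edge_vertices[OF e(1)] sub_hom_mono[of _ _ G P] edge_group_sub[OF e(1)] e(2) by blast
  qed
  have "(x, y) \<in> adj \<or> (y, x) \<in> adj" using assms unfolding undir_def by blast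
  then show ?thesis using edge that by blast
qed

lemma conn_imp_FT_rel:
  assumes "(vert v \<alpha>, y) \<in> conn" "v \<in> V" "\<alpha> \<in> sub_hom G P (SV v)"
  shows "\<exists>w \<beta>. w \<in> V \<and> \<beta> \<in> sub_hom G P (SV w) \<and> y = vert w \<beta> \<and>
    (\<alpha>, \<beta>) \<in> rep_rel G FT P (SV vs)"
  using assms(1) unfolding orbit_conn_def
proof (induction rule: rtrancl_induct)
  case base
  have "(\<alpha>, \<alpha>) \<in> rep_rel G FT P (SV vs)"
    using rep_rel_refl[OF fusion_system_FT _ P order_refl] sub_hom_mono[OF SV_sub_root] assms(2,3)
    by blast
  then show ?case using assms(2,3) by blast
next
  case (step y z)
  then obtain w \<beta> where IH: "w \<in> V" "\<beta> \<in> sub_hom G P (SV w)" "y = vert w \<beta>"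
    "(\<alpha>, \<beta>) \<in> rep_rel G FT P (SV vs)" by blast
  obtain u u' \<gamma> where \<gamma>: "u \<in> V" "u' \<in> V" "\<gamma> \<in> sub_hom G P (SV u)" "\<gamma> \<in> sub_hom G P (SV u')"
    "y = vert u \<gamma>" "z = vert u' \<gamma>"
    using orbit_step_cases[OF step.hyps(2)] by blast
  have "vert w \<beta> = vert u \<gamma>" using IH(3) \<gamma>(5) by (rule trans[OF sym])
  from same_vertex_imp_FT_rel[OF this IH(1,2) \<gamma>(3)]
  have "(\<beta>, \<gamma>) \<in> rep_rel G FT P (SV vs)" .
  with IH(4) have "(\<alpha>, \<gamma>) \<in> rep_rel G FT P (SV vs)" by (rule rep_rel_trans[OF fusion_system_FT])
  with \<gamma> show ?case by blast
qed

lemma FT_rel_imp_conn: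
  assumes "v \<in> V" "w \<in> V" "\<alpha> \<in> sub_hom G P (SV v)" "\<beta> \<in> sub_hom G P (SV w)"
    and "(\<alpha>, \<beta>) \<in> rep_rel G FT P (SV vs)"
  shows "(vert v \<alpha>, vert w \<beta>) \<in> conn"
proof -
  obtain \<gamma> where "\<gamma> \<in> FT (\<alpha> ` P) (\<beta> ` P)" "compose P \<gamma> \<alpha> = \<beta>"
    using assms(5) unfolding rep_rel_iff by blast
  then have "(vert vs \<alpha>, vert vs \<beta>) \<in> conn"
    using FT_preserving sub_hom_onto_image[OF assms(3)] unfolding preserving_homs_def by blast
  then show ?thesis
    using conn_sym[OF conn_root[OF assms(1,3)]] conn_root[OF assms(2,4)] conn_trans by blast
qed

lemma conn_vert_iff:
  assumes "v \<in> V" "w \<in> V" "\<alpha> \<in> sub_hom G P (SV v)" "\<beta> \<in> sub_hom G P (SV w)"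
  shows "(vert v \<alpha>, vert w \<beta>) \<in> conn \<longleftrightarrow> (\<alpha>, \<beta>) \<in> rep_rel G FT P (SV vs)"
proof
  assume "(vert v \<alpha>, vert w \<beta>) \<in> conn"
  then obtain w' \<beta>' where "w' \<in> V" "\<beta>' \<in> sub_hom G P (SV w')" "vert w \<beta> = vert w' \<beta>'"
    "(\<alpha>, \<beta>') \<in> rep_rel G FT P (SV vs)"
    using conn_imp_FT_rel[OF _ assms(1,3)] by blast
  then show "(\<alpha>, \<beta>) \<in> rep_rel G FT P (SV vs)"
    using same_vertex_imp_FT_rel[OF _ assms(2,4)] rep_rel_sym[OF fusion_system_FT]
      rep_rel_trans[OF fusion_system_FT] by metis
qed (rule FT_rel_imp_conn[OF assms])

lemma conn_root_incl_iff:
  assumes "w \<in> V" "subgroup R G" "R \<subseteq> SV w" "\<beta> \<in> sub_hom G P R"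
  shows "(vert vs (restrict id P), vert w \<beta>) \<in> conn \<longleftrightarrow> \<beta> \<in> FT P R"
proof -
  have "\<beta> \<in> sub_hom G P (SV w)" using sub_hom_mono[OF assms(3)] assms(4) by blast
  from conn_vert_iff[OF vs assms(1) restrict_id_sub_hom[OF P P_sub] this]
  show ?thesis
    using rep_rel_incl_iff[OF fusion_system_FT P P_sub assms(2) _ assms(4)] assms(3)
      SV_sub_root[OF assms(1)]
    by auto
qed

lemma orbit_vertexE:
  assumes "x \<in> orbit_vertices G V SV FV P"
  obtains v \<alpha> where "v \<in> V" "\<alpha> \<in> sub_hom G P (SV v)" "x = vert v \<alpha>"
  using assms unfolding orbit_vertices_def Rep_def rep_cls_def by (auto elim!: quotientE)

lemma vert_in_orbit_vertices:
  "v \<in> V \<Longrightarrow> \<alpha> \<in> sub_hom G P (SV v) \<Longrightarrow> vert v \<alpha> \<in> orbit_vertices G V SV FV P"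
  unfolding orbit_vertices_def Rep_def rep_cls_def by (simp add: quotientI)

lemma component_of_root:
  "conn `` {vert vs (restrict id P)} = {(v, c). v \<in> V \<and> c \<in> Rep_in G FT (FV v) P (SV v)}"
proof (intro equalityI subsetI)
  fix y assume "y \<in> conn `` {vert vs (restrict id P)}"
  then obtain w \<beta> where w: "w \<in> V" "\<beta> \<in> sub_hom G P (SV w)" "y = vert w \<beta>"
    using conn_imp_FT_rel[OF _ vs restrict_id_sub_hom[OF P P_sub]] by blast
  with \<open>y \<in> conn `` _\<close> have "\<beta> \<in> FT P (SV w)"
    using conn_root_incl_iff[OF w(1) fusion_system_subgroup[OF fusion_system_FV] order_refl w(2)]
    by simp
  then show "y \<in> {(v, c). v \<in> V \<and> c \<in> Rep_in G FT (FV v) P (SV v)}"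
    unfolding Rep_in_def using w by (simp add: rep_cls_def quotientI)
next
  fix y assume "y \<in> {(v, c). v \<in> V \<and> c \<in> Rep_in G FT (FV v) P (SV v)}"
  then obtain w \<beta> where "w \<in> V" "\<beta> \<in> FT P (SV w)" "y = vert w \<beta>"
    unfolding Rep_in_def rep_cls_def by (auto elim!: quotientE)
  then show "y \<in> conn `` {vert vs (restrict id P)}"
    using conn_root_incl_iff[OF _ fusion_system_subgroup[OF fusion_system_FV] order_refl]
      fusion_systemD(1)[OF fusion_system_FT] by blast
qed

lemma edges_of_root_component:
  "{\<epsilon> \<in> orbit_edges G E SE FE P. \<exists>x \<in> conn `` {vert vs (restrict id P)}. orbit_incident G SV FV P x \<epsilon>}
    = {(e, c). e \<in> E \<and> c \<in> Rep_in G FT (FE e) P (SE e)}"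
proof -
  have conn_edge_iff: "(vert vs (restrict id P), vert u \<gamma>) \<in> conn \<longleftrightarrow> \<gamma> \<in> FT P (SE (v, w))"
    if "(v, w) \<in> E" "u = v \<or> u = w" "\<gamma> \<in> sub_hom G P (SE (v, w))" for v w u \<gamma>
    using conn_root_incl_iff[OF _ fusion_system_subgroup[OF fusion_system_FE[OF that(1)]] _ that(3)]
      edge_vertices[OF that(1)] edge_group_sub[OF that(1)] that(2) by blast
  show ?thesis
  proof (intro equalityI subsetI)
    fix \<epsilon> assume "\<epsilon> \<in> {\<epsilon> \<in> orbit_edges G E SE FE P.
        \<exists>x \<in> conn `` {vert vs (restrict id P)}. orbit_incident G SV FV P x \<epsilon>}"
    then obtain v w c \<gamma> x where \<epsilon>: "\<epsilon> = ((v, w), c)" "((v, w), c) \<in> orbit_edges G E SE FE P"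
      "\<gamma> \<in> c" "x = vert v \<gamma> \<or> x = vert w \<gamma>" "(vert vs (restrict id P), x) \<in> conn"
      unfolding orbit_incident_def by blast
    note e = orbit_edgeD[OF \<epsilon>(2,3)]
    have "\<gamma> \<in> FT P (SE (v, w))" using \<epsilon>(4,5) conn_edge_iff[OF e(1) _ e(2)] by blast
    then show "\<epsilon> \<in> {(e, c). e \<in> E \<and> c \<in> Rep_in G FT (FE e) P (SE e)}"
      unfolding Rep_in_def using \<epsilon>(1) e(1,3) by (simp add: rep_cls_def quotientI)
  next
    fix \<epsilon> assume "\<epsilon> \<in> {(e, c). e \<in> E \<and> c \<in> Rep_in G FT (FE e) P (SE e)}"
    then obtain v w \<gamma> where \<epsilon>: "\<epsilon> = ((v, w), rep_cls G (FE (v, w)) P (SE (v, w)) \<gamma>)"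
      "(v, w) \<in> E" "\<gamma> \<in> FT P (SE (v, w))"
      unfolding Rep_in_def rep_cls_def by (auto elim!: quotientE)
    have \<gamma>: "\<gamma> \<in> sub_hom G P (SE (v, w))" by (rule fusion_systemD(1)[OF fusion_system_FT \<epsilon>(3)])
    have "\<gamma> \<in> rep_cls G (FE (v, w)) P (SE (v, w)) \<gamma>"
      using rep_rel_refl[OF fusion_system_FE[OF \<epsilon>(2)] \<gamma> P order_refl] unfolding rep_cls_def by blast
    then have "orbit_incident G SV FV P (vert v \<gamma>) \<epsilon>" unfolding orbit_incident_def \<epsilon>(1) by blast
    moreover have "\<epsilon> \<in> orbit_edges G E SE FE P"
      unfolding orbit_edges_def Rep_def \<epsilon>(1) using \<epsilon>(2) \<gamma> by (simp add: rep_cls_def quotientI)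
    moreover have "(vert vs (restrict id P), vert v \<gamma>) \<in> conn"
      using conn_edge_iff[OF \<epsilon>(2) _ \<gamma>] \<epsilon>(3) by blast
    ultimately show "\<epsilon> \<in> {\<epsilon> \<in> orbit_edges G E SE FE P.
        \<exists>x \<in> conn `` {vert vs (restrict id P)}. orbit_incident G SV FV P x \<epsilon>}" by blast
  qed
qed

text \<open>A component is sent to the union of the F_T-classes of all representatives of its
vertices, which avoids choosing a representative.\<close>

definition component_class :: "('v \<times> ('a \<Rightarrow> 'a) set) set \<Rightarrow> ('a \<Rightarrow> 'a) set" where
  "component_class M = (\<Union>(w, c) \<in> M. \<Union>\<alpha> \<in> c. rep_cls G FT P (SV vs) \<alpha>)"

lemma component_class_vert:
  assumes v: "v \<in> V" and \<alpha>: "\<alpha> \<in> sub_hom G P (SV v)"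
  shows "component_class (conn `` {vert v \<alpha>}) = rep_cls G FT P (SV vs) \<alpha>"
proof -
  have \<alpha>S: "\<alpha> \<in> sub_hom G P (SV vs)" using sub_hom_mono[OF SV_sub_root[OF v]] \<alpha> by blast
  have same_class: "rep_cls G FT P (SV vs) \<alpha> = rep_cls G FT P (SV vs) \<alpha>'"
    if wc: "(vert v \<alpha>, (w, c)) \<in> conn" "\<alpha>' \<in> c" for w c \<alpha>'
  proof -
    obtain \<beta> where \<beta>: "w \<in> V" "\<beta> \<in> sub_hom G P (SV w)" "c = rep_cls G (FV w) P (SV w) \<beta>"
      "(\<alpha>, \<beta>) \<in> rep_rel G FT P (SV vs)"
      using conn_imp_FT_rel[OF wc(1) v \<alpha>] by blast
    then have "(\<beta>, \<alpha>') \<in> rep_rel G FT P (SV vs)"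
      using wc(2) FV_rel_imp_FT_rel unfolding rep_cls_def by blast
    with \<beta>(4) have r: "(\<alpha>, \<alpha>') \<in> rep_rel G FT P (SV vs)" by (rule rep_rel_trans[OF fusion_system_FT])
    then have "\<alpha>' \<in> sub_hom G P (SV vs)" unfolding rep_rel_def by blast
    with r show ?thesis using rep_cls_eq_iff[OF fusion_system_FT P order_refl \<alpha>S] by blast
  qed
  show ?thesis unfolding component_class_def
  proof (intro equalityI subsetI)
    fix \<phi> assume "\<phi> \<in> (\<Union>(w, c) \<in> conn `` {vert v \<alpha>}. \<Union>\<alpha>' \<in> c. rep_cls G FT P (SV vs) \<alpha>')"
    then obtain w c \<alpha>' where "(vert v \<alpha>, (w, c)) \<in> conn" "\<alpha>' \<in> c" "\<phi> \<in> rep_cls G FT P (SV vs) \<alpha>'"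
      by blast
    then show "\<phi> \<in> rep_cls G FT P (SV vs) \<alpha>" using same_class by blast
  next
    fix \<phi> assume \<phi>: "\<phi> \<in> rep_cls G FT P (SV vs) \<alpha>"
    have "(vert v \<alpha>, vert v \<alpha>) \<in> conn" using conn_equiv unfolding equiv_def refl_on_def by blast
    moreover have "\<alpha> \<in> rep_cls G (FV v) P (SV v) \<alpha>"
      using rep_rel_refl[OF fusion_system_FV[OF v] \<alpha> P order_refl] unfolding rep_cls_def by blast
    ultimately show "\<phi> \<in> (\<Union>(w, c) \<in> conn `` {vert v \<alpha>}. \<Union>\<alpha>' \<in> c. rep_cls G FT P (SV vs) \<alpha>')"
      using \<phi> by blast
  qed
qed

lemma component_class_bij:
  "bij_betw component_class (orbit_vertices G V SV FV P // conn) (Rep G FT P (SV vs))"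
proof (rule bij_betw_imageI)
  show "inj_on component_class (orbit_vertices G V SV FV P // conn)"
  proof (rule inj_onI)
    fix M N assume "M \<in> orbit_vertices G V SV FV P // conn" "N \<in> orbit_vertices G V SV FV P // conn"
      and eq: "component_class M = component_class N"
    then obtain v \<alpha> w \<beta> where v: "v \<in> V" "\<alpha> \<in> sub_hom G P (SV v)" "M = conn `` {vert v \<alpha>}"
      and w: "w \<in> V" "\<beta> \<in> sub_hom G P (SV w)" "N = conn `` {vert w \<beta>}"
      by (auto elim!: quotientE orbit_vertexE)
    from eq v w have "rep_cls G FT P (SV vs) \<alpha> = rep_cls G FT P (SV vs) \<beta>"
      by (simp add: component_class_vert)
    then have "(\<alpha>, \<beta>) \<in> rep_rel G FT P (SV vs)"
      using rep_cls_eq_iff[OF fusion_system_FT P order_refl] sub_hom_mono SV_sub_root v w by blast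
    then show "M = N" unfolding v(3) w(3)
      using conn_vert_iff[OF v(1) w(1) v(2) w(2)] equiv_class_eq[OF conn_equiv] by blast
  qed
  show "component_class ` (orbit_vertices G V SV FV P // conn) = Rep G FT P (SV vs)"
  proof (intro equalityI subsetI)
    fix c assume "c \<in> component_class ` (orbit_vertices G V SV FV P // conn)"
    then obtain v \<alpha> where v: "v \<in> V" "\<alpha> \<in> sub_hom G P (SV v)"
      and "c = component_class (conn `` {vert v \<alpha>})"
      by (auto elim!: quotientE orbit_vertexE)
    then have "c = rep_cls G FT P (SV vs) \<alpha>" by (simp add: component_class_vert)
    moreover have "\<alpha> \<in> sub_hom G P (SV vs)" using sub_hom_mono[OF SV_sub_root[OF v(1)]] v(2) by blast
    ultimately show "c \<in> Rep G FT P (SV vs)" unfolding Rep_def rep_cls_def by (simp add: quotientI)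
  next
    fix c assume "c \<in> Rep G FT P (SV vs)"
    then obtain \<alpha> where "\<alpha> \<in> sub_hom G P (SV vs)" "c = rep_cls G FT P (SV vs) \<alpha>"
      unfolding Rep_def rep_cls_def by (auto elim!: quotientE)
    then have "c = component_class (conn `` {vert vs \<alpha>})" by (simp add: component_class_vert[OF vs])
    moreover have "conn `` {vert vs \<alpha>} \<in> orbit_vertices G V SV FV P // conn"
      using vert_in_orbit_vertices[OF vs \<open>\<alpha> \<in> _\<close>] by (rule quotientI)
    ultimately show "c \<in> component_class ` (orbit_vertices G V SV FV P // conn)" by blast
  qed
qed

end

theorem proposition2p5:
  fixes G :: "'a monoid" and p :: nat and V :: "'v set" and E :: "('v \<times> 'v) set"
    and SV :: "'v \<Rightarrow> 'a set" and SE :: "'v \<times> 'v \<Rightarrow> 'a set"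
    and FV :: "'v \<Rightarrow> 'a set \<Rightarrow> 'a set \<Rightarrow> ('a \<Rightarrow> 'a) set"
    and FE :: "'v \<times> 'v \<Rightarrow> 'a set \<Rightarrow> 'a set \<Rightarrow> ('a \<Rightarrow> 'a) set"
    and vs :: 'v and P :: "'a set"
  assumes grp: "group G"
    and tree: "fin_tree V E"
    and vs: "vs \<in> V"
    and FVfs: "\<forall>v\<in>V. fusion_system G p (SV v) (FV v)"
    and FEfs: "\<forall>e\<in>E. fusion_system G p (SE e) (FE e)"
    and incl: "\<forall>v w. (v,w) \<in> E \<longrightarrow> SE (v,w) \<subseteq> SV v \<and> SE (v,w) \<subseteq> SV w \<and>
                 (\<forall>Q R. FE (v,w) Q R \<subseteq> FV v Q R \<and> FE (v,w) Q R \<subseteq> FV w Q R)"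
    and H: "hyp_H V E SV SE vs"
    and P: "subgroup P G" "P \<subseteq> SV vs"
  defines "FT \<equiv> completion G p (SV vs) V SV FV"
    and "RV \<equiv> orbit_vertices G V SV FV P"
    and "RE \<equiv> orbit_edges G E SE FE P"
    and "conn \<equiv> orbit_conn G E SV SE FV FE P"
    and "x0 \<equiv> (vs, rep_cls G (FV vs) P (SV vs) (restrict id P))"
  shows
    "conn `` {x0} = {(v,c). v \<in> V \<and> c \<in> Rep_in G FT (FV v) P (SV v)}
     \<and> {\<epsilon> \<in> RE. \<exists>x \<in> conn `` {x0}. orbit_incident G SV FV P x \<epsilon>}
         = {(e,c). e \<in> E \<and> c \<in> Rep_in G FT (FE e) P (SE e)}
     \<and> (\<exists>\<Phi>. (\<forall>v\<in>V. \<forall>\<alpha>\<in>sub_hom G P (SV v).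
              \<Phi> (conn `` {(v, rep_cls G (FV v) P (SV v) \<alpha>)}) = rep_cls G FT P (SV vs) \<alpha>)
            \<and> bij_betw \<Phi> (RV // conn) (Rep G FT P (SV vs)))"
proof -
  interpret fusion_tree G p V E SV SE FV FE vs P
    by (intro fusion_tree.intro fusion_tree_axioms.intro) (use grp tree vs FVfs FEfs incl H P in blast)+
  have "\<forall>v\<in>V. \<forall>\<alpha>\<in>sub_hom G P (SV v).
      component_class (conn `` {(v, rep_cls G (FV v) P (SV v) \<alpha>)}) = rep_cls G FT P (SV vs) \<alpha>"
    using component_class_vert unfolding conn_def FT_def by blast
  then show ?thesis
    using component_of_root edges_of_root_component component_class_bij
    unfolding FT_def RV_def RE_def conn_def x0_def by blast
qed

end
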